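(* Let $\sigma > -2$ and $p < -1-\sigma$, and set \[ a = \frac{\sigma+2}{1-p} \in (0,1), \qquad c_a = \big(a(1-a)\big)^{1/(p-1)}, \qquad u_a(x) = c_a x^a . \] Then there exists a one-parameter family $\{u^\alpha\}_{\alpha>0}$ of positive functions in $C^2(0,+\infty)$, each solving \[ u''(x) + x^\sigma u(x)^p = 0 \quad \text{for } x>0, \] such that $\lim_{x\searrow 0} u^\alpha(x)/u_a(x) = 1$ for every $\alpha>0$, and such that whenever $\alpha_1 > \alpha_2 > 0$, \[ u^{\alpha_1}(x) > u^{\alpha_2}(x) > u_a(x) \quad \text{for all } x > 0 . \]
   Context: The function $u_a$ is itself a positive solution of the same equation on $(0,+\infty)$. *)

theory Defs
  imports "HOL-Analysis.Analysis"
begin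

definition C2_on :: "real set \<Rightarrow> (real \<Rightarrow> real) \<Rightarrow> bool" where
  "C2_on S f \<longleftrightarrow> (\<exists>f' f''. (\<forall>x\<in>S. (f has_real_derivative f' x) (at x)) \<and>
                        (\<forall>x\<in>S. (f' has_real_derivative f'' x) (at x)) \<and>
                        continuous_on S f'')"

definition expo_a :: "real \<Rightarrow> real \<Rightarrow> real" where
  "expo_a \<sigma> p = (\<sigma> + 2) / (1 - p)"

definition const_c :: "real \<Rightarrow> real \<Rightarrow> real" where
  "const_c \<sigma> p = (expo_a \<sigma> p * (1 - expo_a \<sigma> p)) powr (1 / (p - 1))"

definition u_sing :: "real \<Rightarrow> real \<Rightarrow> real \<Rightarrow> real" where
  "u_sing \<sigma> p x = const_c \<sigma> p * x powr (expo_a \<sigma> p)"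

end

theory Submission
  imports Defs
begin

text \<open>The substitution \<open>u(x) = x\<^sup>a V(-ln (\<alpha> x))\<close> turns \<open>u'' + x\<^sup>\<sigma> u\<^sup>p = 0\<close> into the autonomous
  equation \<open>V'' - (2a - 1) V' + a(a - 1) V + V\<^sup>p = 0\<close>, whose constant solution \<open>V = c\<^sub>a\<close> gives \<open>u\<^sub>a\<close>.
  Writing \<open>V = c\<^sub>a + W\<close>, the linearisation at \<open>c\<^sub>a\<close> has characteristic roots of opposite signs, so
  there is a solution \<open>W \<sim> \<xi> e\<^bsup>-l\<^sub>1 t\<^esup>\<close> as \<open>t \<rightarrow> \<infinity>\<close>; it is obtained on the whole line by a contraction
  argument in a weighted space of bounded continuous functions. Since \<open>e\<^bsup>(1 - 2a) t\<^esup> W'\<close> increases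
  while \<open>W > 0\<close> and \<open>W \<rightarrow> 0\<close>, one gets \<open>W > 0\<close> and \<open>W' < 0\<close> everywhere. Then
  \<open>u\<^sup>\<alpha>(x) = x\<^sup>a (c\<^sub>a + W(-ln (\<alpha> x)))\<close> are the required solutions: \<open>W \<rightarrow> 0\<close> gives \<open>u\<^sup>\<alpha> / u\<^sub>a \<rightarrow> 1\<close> as
  \<open>x \<rightarrow> 0\<close>, \<open>W > 0\<close> gives \<open>u\<^sup>\<alpha> > u\<^sub>a\<close>, and \<open>W' < 0\<close> gives monotonicity in \<open>\<alpha>\<close>.\<close>

section \<open>The Emden--Fowler substitution\<close>

lemma has_real_derivative_powr_log_substitution:
  assumes F: "(F has_real_derivative D) (at (- ln (\<alpha> * x)))" and "\<alpha> > 0" "x > 0"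
  shows "((\<lambda>x. x powr k * F (- ln (\<alpha> * x))) has_real_derivative
           x powr (k - 1) * (k * F (- ln (\<alpha> * x)) - D)) (at x)"
proof -
  have "((\<lambda>x. - ln (\<alpha> * x)) has_real_derivative - (1 / x)) (at x)"
    using assms by (auto intro!: derivative_eq_intros)
  from DERIV_chain2[OF F this]
  have "((\<lambda>x. x powr k * F (- ln (\<alpha> * x))) has_real_derivative
          k * x powr (k - 1) * F (- ln (\<alpha> * x)) + x powr k * (D * - (1 / x))) (at x)"
    using assms by (auto intro!: derivative_eq_intros)
  moreover have "x powr k = x powr (k - 1) * x" using \<open>x > 0\<close> by (simp add: powr_diff)
  ultimately show ?thesis using \<open>x > 0\<close> by (simp add: algebra_simps)
qed

lemma has_real_derivative_emden_fowler_derivative: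
  assumes V': "\<And>t. (V has_real_derivative V' t) (at t)"
    and V'': "\<And>t. (V' has_real_derivative V'' t) (at t)"
    and ode: "\<And>t. V'' t - (2 * a - 1) * V' t + a * (a - 1) * V t + V t powr p = 0"
    and \<alpha>: "\<alpha> > 0" and x: "x > 0"
  shows "((\<lambda>x. x powr (a - 1) * (a * V (- ln (\<alpha> * x)) - V' (- ln (\<alpha> * x)))) has_real_derivative
           - (x powr (a - 2) * V (- ln (\<alpha> * x)) powr p)) (at x)"
proof -
  define t where "t = - ln (\<alpha> * x)"
  have "((\<lambda>t. a * V t - V' t) has_real_derivative a * V' t - V'' t) (at t)"
    by (intro DERIV_diff DERIV_cmult V' V'')
  from has_real_derivative_powr_log_substitution[OF this[unfolded t_def] \<alpha> x, of "a - 1"]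
  have "((\<lambda>x. x powr (a - 1) * (a * V (- ln (\<alpha> * x)) - V' (- ln (\<alpha> * x)))) has_real_derivative
      x powr (a - 1 - 1) * ((a - 1) * (a * V t - V' t) - (a * V' t - V'' t))) (at x)"
    unfolding t_def .
  moreover have "(a - 1) * (a * V t - V' t) - (a * V' t - V'' t) = - (V t powr p)"
    using ode[of t] by (simp add: algebra_simps)
  ultimately show ?thesis unfolding t_def by simp
qed

lemma emden_fowler_substitution:
  fixes V V' V'' :: "real \<Rightarrow> real" and a p \<sigma> \<alpha> :: real
  assumes V': "\<And>t. (V has_real_derivative V' t) (at t)"
    and V'': "\<And>t. (V' has_real_derivative V'' t) (at t)"
    and V_pos: "\<And>t. V t > 0"
    and ode: "\<And>t. V'' t - (2 * a - 1) * V' t + a * (a - 1) * V t + V t powr p = 0"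
    and exponents: "\<sigma> + a * p = a - 2" and \<alpha>: "\<alpha> > 0"
  shows "C2_on {0<..} (\<lambda>x. x powr a * V (- ln (\<alpha> * x)))"
    and "\<forall>x>0. deriv (deriv (\<lambda>x. x powr a * V (- ln (\<alpha> * x)))) x
               + x powr \<sigma> * (x powr a * V (- ln (\<alpha> * x))) powr p = 0"
proof -
  define u where "u x = x powr a * V (- ln (\<alpha> * x))" for x
  define u' where "u' x = x powr (a - 1) * (a * V (- ln (\<alpha> * x)) - V' (- ln (\<alpha> * x)))" for x
  define u'' where "u'' x = - (x powr (a - 2) * V (- ln (\<alpha> * x)) powr p)" for x
  have du: "(u has_real_derivative u' x) (at x)" if "x > 0" for x
    unfolding u_def[abs_def] u'_def
    by (rule has_real_derivative_powr_log_substitution[OF V' \<alpha> that])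
  have du': "(u' has_real_derivative u'' x) (at x)" if "x > 0" for x
    unfolding u'_def[abs_def] u''_def
    by (rule has_real_derivative_emden_fowler_derivative[OF V' V'' ode \<alpha> that])
  have V_cont: "continuous_on UNIV V"
    using V' by (meson DERIV_isCont continuous_at_imp_continuous_on)
  have "continuous_on {0<..} u''"
    unfolding u''_def
    by (intro continuous_intros continuous_on_compose2[OF V_cont])
      (use \<alpha> in \<open>auto simp: V_pos less_imp_neq[OF V_pos, symmetric]\<close>)
  then show "C2_on {0<..} (\<lambda>x. x powr a * V (- ln (\<alpha> * x)))"
    unfolding C2_on_def u_def[symmetric] using du du' \<alpha> by auto
  show "\<forall>x>0. deriv (deriv (\<lambda>x. x powr a * V (- ln (\<alpha> * x)))) x
               + x powr \<sigma> * (x powr a * V (- ln (\<alpha> * x))) powr p = 0"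
  proof (intro allI impI)
    fix x :: real assume x: "x > 0"
    have "(deriv u has_real_derivative u'' x) (at x)"
      by (rule has_field_derivative_transform_within_open[OF du'[OF x], of "{0<..}"])
        (use x du in \<open>auto intro: DERIV_imp_deriv[symmetric]\<close>)
    then have "deriv (deriv u) x = u'' x" by (rule DERIV_imp_deriv)
    moreover have "x powr \<sigma> * u x powr p = x powr (a - 2) * V (- ln (\<alpha> * x)) powr p"
      using x V_pos exponents by (simp add: u_def powr_mult powr_powr flip: powr_add)
    ultimately show "deriv (deriv (\<lambda>x. x powr a * V (- ln (\<alpha> * x)))) x
               + x powr \<sigma> * (x powr a * V (- ln (\<alpha> * x))) powr p = 0"
      unfolding u_def[abs_def] u''_def by simp
  qed
qed

section \<open>Decaying solutions of linear equations with constant coefficients\<close>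

lemma exp_dominated_integral_Ici:
  fixes h :: "real \<Rightarrow> real"
  assumes cont: "continuous_on UNIV h" and k: "k1 > 0" "k2 > 0"
    and bound: "\<And>s. s \<ge> t \<Longrightarrow> \<bar>h s\<bar> \<le> D1 * exp (- (k1 * s)) + D2 * exp (- (k2 * s))"
  shows "h integrable_on {t..}"
    and "\<bar>integral {t..} h\<bar> \<le> D1 * exp (- (k1 * t)) / k1 + D2 * exp (- (k2 * t)) / k2"
proof -
  have dom: "((\<lambda>s. D1 * exp (- (k1 * s)) + D2 * exp (- (k2 * s))) has_integral
      (D1 * exp (- (k1 * t)) / k1 + D2 * exp (- (k2 * t)) / k2)) {t..}"
    using has_integral_add[OF has_integral_mult_right[OF has_integral_exp_minus_to_infinity[OF k(1)]]
        has_integral_mult_right[OF has_integral_exp_minus_to_infinity[OF k(2)]]]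
    by simp
  have meas: "h \<in> borel_measurable (lebesgue_on {t..})"
    by (rule continuous_imp_measurable_on_sets_lebesgue) (auto intro: continuous_on_subset[OF cont])
  show "h integrable_on {t..}"
    by (rule measurable_bounded_by_integrable_imp_integrable[OF meas dom[THEN has_integral_integrable]])
      (use bound in auto)
  show "\<bar>integral {t..} h\<bar> \<le> D1 * exp (- (k1 * t)) / k1 + D2 * exp (- (k2 * t)) / k2"
    using integral_norm_bound_integral'[OF _ meas _ dom] bound by simp
qed

lemma has_real_derivative_integral_Ici:
  fixes h :: "real \<Rightarrow> real"
  assumes cont: "continuous_on UNIV h" and int: "\<And>\<tau>. h integrable_on {\<tau>..}"
  shows "((\<lambda>\<tau>. integral {\<tau>..} h) has_real_derivative - h x) (at x)"
proof -
  define a where "a = x - 1"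
  have split: "integral {\<tau>..} h = integral {a..} h - integral {a..\<tau>} h" if "\<tau> > a" for \<tau>
  proof -
    have "{a..\<tau>} \<inter> {\<tau>..} = {\<tau>}" using that by auto
    then have "integral ({a..\<tau>} \<union> {\<tau>..}) h = integral {a..\<tau>} h + integral {\<tau>..} h"
      by (intro integral_Un[OF integrable_continuous_real[OF continuous_on_subset[OF cont]] int]) auto
    moreover have "{a..\<tau>} \<union> {\<tau>..} = {a..}" using that by auto
    ultimately show ?thesis by simp
  qed
  have "((\<lambda>\<tau>. integral {a..\<tau>} h) has_real_derivative h x) (at x within {a..x + 1})"
    by (rule integral_has_real_derivative[OF continuous_on_subset[OF cont]]) (auto simp: a_def)
  moreover have "x \<in> interior {a..x + 1}" by (simp add: a_def)
  ultimately have "((\<lambda>\<tau>. integral {a..\<tau>} h) has_real_derivative h x) (at x)"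
    by (metis at_within_interior)
  then have "((\<lambda>\<tau>. integral {a..} h - integral {a..\<tau>} h) has_real_derivative - h x) (at x)"
    using DERIV_diff[OF DERIV_const] by (metis diff_0)
  then show ?thesis
    by (rule has_field_derivative_transform_within_open[of _ _ _ "{a<..}"]) (auto simp: a_def split)
qed

text \<open>Variation of constants with the Green kernel of \<open>w'' + (l\<^sub>1 + l\<^sub>2) w' + l\<^sub>1 l\<^sub>2 w = f\<close>,
  integrated over \<open>[t, \<infinity>)\<close>: this selects the solution decaying as \<open>t \<rightarrow> \<infinity>\<close> and admits
  forcings that grow like \<open>e\<^bsup>-K s\<^esup>\<close> as \<open>s \<rightarrow> -\<infinity>\<close>.\<close>
locale tail_green =
  fixes l1 l2 K :: real
  assumes l2_less_l1: "l2 < l1" and l1_pos: "0 < l1" and K_ge: "2 * l1 \<le> K"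
begin

lemma l1_less_K: "l1 < K"
  using l1_pos K_ge by simp

definition exp_dominated :: "real \<Rightarrow> real \<Rightarrow> (real \<Rightarrow> real) \<Rightarrow> bool" where
  "exp_dominated D1 D2 f \<longleftrightarrow> continuous_on UNIV f \<and>
     (\<forall>s. \<bar>f s\<bar> \<le> D1 * exp (- (2 * l1 * s)) + D2 * exp (- (K * s)))"

definition green :: "real \<Rightarrow> real" where
  "green r = (exp (l1 * r) - exp (l2 * r)) / (l1 - l2)"

definition tail_solution :: "(real \<Rightarrow> real) \<Rightarrow> real \<Rightarrow> real" where
  "tail_solution f t = integral {t..} (\<lambda>s. green (s - t) * f s)"

definition exp_conv :: "real \<Rightarrow> (real \<Rightarrow> real) \<Rightarrow> real \<Rightarrow> real" where
  "exp_conv l f t = exp (- (l * t)) * integral {t..} (\<lambda>s. exp (l * s) * f s)"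

definition tail_solution' :: "(real \<Rightarrow> real) \<Rightarrow> real \<Rightarrow> real" where
  "tail_solution' f t = (- l1 * exp_conv l1 f t + l2 * exp_conv l2 f t) / (l1 - l2)"

definition tail_solution'' :: "(real \<Rightarrow> real) \<Rightarrow> real \<Rightarrow> real" where
  "tail_solution'' f t = (l1\<^sup>2 * exp_conv l1 f t - l2\<^sup>2 * exp_conv l2 f t) / (l1 - l2) + f t"

definition weight :: "real \<Rightarrow> real" where
  "weight t = exp (- (l1 * t)) + exp (- (K * t))"

lemma green_bounds:
  assumes "r \<ge> 0"
  shows "0 \<le> green r" and "green r \<le> exp (l1 * r) / (l1 - l2)"
proof -
  have "l2 * r \<le> l1 * r" using assms l2_less_l1 by (intro mult_right_mono) auto
  then show "0 \<le> green r" "green r \<le> exp (l1 * r) / (l1 - l2)"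
    unfolding green_def using l2_less_l1 by (auto intro!: divide_right_mono)
qed

lemma exp_dominated_exp_integrable:
  assumes f: "exp_dominated D1 D2 f" and "l \<le> l1"
  shows "(\<lambda>s. exp (l * s) * f s) integrable_on {t..}"
proof (rule exp_dominated_integral_Ici(1))
  show "continuous_on UNIV (\<lambda>s. exp (l * s) * f s)"
    using f by (auto simp: exp_dominated_def intro!: continuous_intros)
  show "2 * l1 - l > 0" "K - l > 0" using assms l1_pos l1_less_K by auto
  fix s
  have "\<bar>exp (l * s) * f s\<bar> \<le> exp (l * s) * (D1 * exp (- (2 * l1 * s)) + D2 * exp (- (K * s)))"
    using f by (auto simp: exp_dominated_def abs_mult intro!: mult_left_mono)
  also have "\<dots> = D1 * exp (- ((2 * l1 - l) * s)) + D2 * exp (- ((K - l) * s))"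
    by (simp add: algebra_simps flip: exp_add)
  finally show "\<bar>exp (l * s) * f s\<bar> \<le> D1 * exp (- ((2 * l1 - l) * s)) + D2 * exp (- ((K - l) * s))" .
qed

lemma has_real_derivative_exp_conv:
  assumes f: "exp_dominated D1 D2 f" and "l \<le> l1"
  shows "(exp_conv l f has_real_derivative - (l * exp_conv l f t) - f t) (at t)"
proof -
  have "((\<lambda>t. integral {t..} (\<lambda>s. exp (l * s) * f s)) has_real_derivative - (exp (l * t) * f t)) (at t)"
    using f exp_dominated_exp_integrable[OF assms]
    by (intro has_real_derivative_integral_Ici) (auto simp: exp_dominated_def intro!: continuous_intros)
  then have "(exp_conv l f has_real_derivative
      - l * exp (- (l * t)) * integral {t..} (\<lambda>s. exp (l * s) * f s)
      + exp (- (l * t)) * - (exp (l * t) * f t)) (at t)"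
    unfolding exp_conv_def[abs_def] by (auto intro!: derivative_eq_intros)
  moreover have "exp (- (l * t)) * (exp (l * t) * f t) = f t"
    by (simp add: mult.assoc[symmetric] flip: exp_add)
  ultimately show ?thesis by (simp add: exp_conv_def mult.assoc)
qed

lemma exp_dominated_tail_solution:
  assumes f: "exp_dominated D1 D2 f"
  shows "(\<lambda>s. green (s - t) * f s) integrable_on {t..}"
    and "\<bar>tail_solution f t\<bar> \<le> (D1 * exp (- (2 * l1 * t)) / l1 + D2 * exp (- (K * t)) / (K - l1)) / (l1 - l2)"
proof -
  have bound: "\<bar>green (s - t) * f s\<bar> \<le> (D1 * exp (- (l1 * t)) / (l1 - l2)) * exp (- (l1 * s))
      + (D2 * exp (- (l1 * t)) / (l1 - l2)) * exp (- ((K - l1) * s))" if "s \<ge> t" for s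
  proof -
    have "\<bar>green (s - t) * f s\<bar> = green (s - t) * \<bar>f s\<bar>"
      using green_bounds(1)[of "s - t"] that by (simp add: abs_mult)
    also have "\<dots> \<le> exp (l1 * (s - t)) / (l1 - l2) * (D1 * exp (- (2 * l1 * s)) + D2 * exp (- (K * s)))"
      using f green_bounds[of "s - t"] that l2_less_l1 unfolding exp_dominated_def
      by (intro mult_mono) auto
    finally show ?thesis by (simp add: field_simps add_divide_distrib flip: exp_add)
  qed
  have cont: "continuous_on UNIV (\<lambda>s. green (s - t) * f s)"
    using f l2_less_l1 unfolding exp_dominated_def green_def by (auto intro!: continuous_intros)
  have K: "K - l1 > 0" using l1_less_K by simp
  note int = exp_dominated_integral_Ici[where t = t, OF cont l1_pos K bound]
  show "(\<lambda>s. green (s - t) * f s) integrable_on {t..}" by (rule int(1))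
  have "exp (- (2 * l1 * t)) = exp (- (l1 * t)) * exp (- (l1 * t))"
    and "exp (- (K * t)) = exp (- (l1 * t)) * exp (- ((K - l1) * t))"
    by (simp_all add: algebra_simps flip: exp_add)
  then show "\<bar>tail_solution f t\<bar> \<le> (D1 * exp (- (2 * l1 * t)) / l1 + D2 * exp (- (K * t)) / (K - l1)) / (l1 - l2)"
    using int(2) unfolding tail_solution_def by (simp add: add_divide_distrib mult_ac)
qed

lemma weight_pos: "weight t > 0"
  by (simp add: weight_def add_pos_pos)

lemma continuous_on_weight: "continuous_on UNIV weight"
  unfolding weight_def by (intro continuous_intros)

lemma exp_K_le_exp_l1: "s \<ge> 0 \<Longrightarrow> exp (- (K * s)) \<le> exp (- (l1 * s))"
  using l1_less_K by (simp add: mult_right_mono)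

lemma exp_l1_le_exp_K: "s \<le> 0 \<Longrightarrow> exp (- (l1 * s)) \<le> exp (- (K * s))"
  using l1_less_K by (simp add: mult_right_mono_neg)

lemma exp_2l1_le_weight: "exp (- (2 * l1 * s)) \<le> weight s"
proof (cases "s \<ge> 0")
  case True
  then have "exp (- (2 * l1 * s)) \<le> exp (- (l1 * s))" using l1_pos by (simp add: mult_right_mono)
  then show ?thesis unfolding weight_def by (smt (verit) exp_gt_zero)
next
  case False
  then have "exp (- (2 * l1 * s)) \<le> exp (- (K * s))" using K_ge by (simp add: mult_right_mono_neg)
  then show ?thesis unfolding weight_def by (smt (verit) exp_gt_zero)
qed

lemma abs_tail_solution_le_majorant:
  assumes f: "exp_dominated D1 D2 f" and D: "D1 \<ge> 0" "D2 \<ge> 0"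
    and \<omega>: "exp (- (2 * l1 * t)) \<le> \<omega>" "exp (- (K * t)) \<le> \<omega>"
  shows "\<bar>tail_solution f t\<bar> \<le> (D1 / l1 + D2 / (K - l1)) / (l1 - l2) * \<omega>"
proof -
  have "D1 * exp (- (2 * l1 * t)) / l1 + D2 * exp (- (K * t)) / (K - l1) \<le> D1 / l1 * \<omega> + D2 / (K - l1) * \<omega>"
    using \<omega> D l1_pos l1_less_K by (intro add_mono) (simp_all add: divide_right_mono mult_left_mono)
  then have "(D1 * exp (- (2 * l1 * t)) / l1 + D2 * exp (- (K * t)) / (K - l1)) / (l1 - l2)
      \<le> (D1 / l1 * \<omega> + D2 / (K - l1) * \<omega>) / (l1 - l2)"
    using l2_less_l1 by (intro divide_right_mono) auto
  then show ?thesis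
    using exp_dominated_tail_solution(2)[OF f, of t] by (simp add: field_simps)
qed

lemma abs_tail_solution_le_weight:
  assumes "exp_dominated D1 D2 f" "D1 \<ge> 0" "D2 \<ge> 0"
  shows "\<bar>tail_solution f t\<bar> \<le> (D1 / l1 + D2 / (K - l1)) / (l1 - l2) * weight t"
  using abs_tail_solution_le_majorant[OF assms exp_2l1_le_weight] by (simp add: weight_def)

lemma abs_tail_solution_le_exp:
  assumes "exp_dominated D1 D2 f" "D1 \<ge> 0" "D2 \<ge> 0" and "t \<ge> 0"
  shows "\<bar>tail_solution f t\<bar> \<le> (D1 / l1 + D2 / (K - l1)) / (l1 - l2) * exp (- (l1 * t))"
  using \<open>t \<ge> 0\<close> l1_pos
  by (intro abs_tail_solution_le_majorant[OF assms(1-3)] exp_K_le_exp_l1) (simp_all add: mult_right_mono)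

lemma tail_solution_diff:
  assumes "exp_dominated D1 D2 f" "exp_dominated E1 E2 g"
  shows "tail_solution f t - tail_solution g t = tail_solution (\<lambda>s. f s - g s) t"
  using exp_dominated_tail_solution(1)[OF assms(1)] exp_dominated_tail_solution(1)[OF assms(2)]
  unfolding tail_solution_def by (simp add: integral_diff right_diff_distrib)

lemma tail_solution_exp_conv:
  assumes f: "exp_dominated D1 D2 f"
  shows "tail_solution f t = (exp_conv l1 f t - exp_conv l2 f t) / (l1 - l2)"
proof -
  have "green (s - t) * f s = (exp (- (l1 * t)) * (exp (l1 * s) * f s)
      - exp (- (l2 * t)) * (exp (l2 * s) * f s)) / (l1 - l2)" for s
    unfolding green_def by (simp add: field_simps flip: exp_add)
  then show ?thesis
    unfolding tail_solution_def exp_conv_def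
    using exp_dominated_exp_integrable[OF f order.refl] exp_dominated_exp_integrable[OF f less_imp_le[OF l2_less_l1]]
    by (simp add: integral_diff integral_divide)
qed

lemma has_real_derivative_tail_solution:
  assumes f: "exp_dominated D1 D2 f"
  shows "(tail_solution f has_real_derivative tail_solution' f t) (at t)"
proof -
  note d1 = has_real_derivative_exp_conv[OF f order.refl]
    and d2 = has_real_derivative_exp_conv[OF f less_imp_le[OF l2_less_l1]]
  have "((\<lambda>t. (exp_conv l1 f t - exp_conv l2 f t) / (l1 - l2)) has_real_derivative
      ((- (l1 * exp_conv l1 f t) - f t) - (- (l2 * exp_conv l2 f t) - f t)) / (l1 - l2)) (at t)"
    by (intro DERIV_cdivide DERIV_diff d1 d2)
  then show ?thesis
    unfolding tail_solution_exp_conv[OF f, abs_def] tail_solution'_def by simp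
qed

lemma has_real_derivative_tail_solution':
  assumes f: "exp_dominated D1 D2 f"
  shows "(tail_solution' f has_real_derivative tail_solution'' f t) (at t)"
proof -
  note d1 = has_real_derivative_exp_conv[OF f order.refl]
    and d2 = has_real_derivative_exp_conv[OF f less_imp_le[OF l2_less_l1]]
  have "(tail_solution' f has_real_derivative
      (- l1 * (- (l1 * exp_conv l1 f t) - f t) + l2 * (- (l2 * exp_conv l2 f t) - f t)) / (l1 - l2)) (at t)"
    unfolding tail_solution'_def[abs_def] by (intro DERIV_cdivide DERIV_add DERIV_cmult d1 d2)
  moreover have "(- l1 * (- (l1 * exp_conv l1 f t) - f t) + l2 * (- (l2 * exp_conv l2 f t) - f t)) / (l1 - l2)
      = tail_solution'' f t"
    using l2_less_l1 unfolding tail_solution''_def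
    by (simp add: field_simps power2_eq_square)
  ultimately show ?thesis by simp
qed

lemma tail_solution_ode:
  assumes "exp_dominated D1 D2 f"
  shows "tail_solution'' f t + (l1 + l2) * tail_solution' f t + l1 * l2 * tail_solution f t = f t"
proof -
  have "l1 - l2 \<noteq> 0" using l2_less_l1 by simp
  then show ?thesis
    unfolding tail_solution''_def tail_solution'_def tail_solution_exp_conv[OF assms]
    by (simp add: divide_simps) (simp add: algebra_simps power2_eq_square)
qed

end

section \<open>The nonlinearity\<close>

lemma powr_diff_le_tangent:
  fixes c y q :: real
  assumes c: "c > 0" and y: "y \<ge> 0" and q: "q \<le> 0"
  shows "c powr q - (c + y) powr q \<le> - q * c powr (q - 1) * y"
proof (cases "y = 0")
  case False
  then have "y > 0" using y by simp
  have "\<exists>z. 0 < z \<and> z < y \<and> (c + y) powr q - (c + 0) powr q = (y - 0) * (q * (c + z) powr (q - 1))"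
    by (rule MVT2[OF \<open>y > 0\<close>]) (use c in \<open>auto intro!: derivative_eq_intros\<close>)
  then obtain z where z: "0 < z" "z < y" and mvt: "(c + y) powr q - c powr q = y * (q * (c + z) powr (q - 1))"
    by auto
  have "(c + z) powr (q - 1) \<le> c powr (q - 1)"
    using powr_mono2'[of "q - 1" c "c + z"] c z q by simp
  then have "y * (- q * (c + z) powr (q - 1)) \<le> y * (- q * c powr (q - 1))"
    using y q by (intro mult_left_mono) auto
  then show ?thesis using mvt by (simp add: algebra_simps)
qed simp

locale emden_fowler =
  fixes a p :: real
  assumes a_pos: "0 < a" and a_less_1: "a < 1" and p_less_1: "p < 1"
begin

definition c :: real where
  "c = (a * (1 - a)) powr (1 / (p - 1))"

definition \<mu> :: real where
  "\<mu> = a * (1 - a) * (1 - p)"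

text \<open>With \<open>V = c + w\<close> the profile equation reads \<open>w'' + (1 - 2a) w' - \<mu> w = remainder w\<close>, where
  \<open>\<mu>\<close> is the derivative of \<open>a(1 - a) V - V\<^sup>p\<close> at its zero \<open>V = c\<close>.\<close>
definition remainder :: "real \<Rightarrow> real" where
  "remainder w = a * (1 - a) * (c + w) - (c + w) powr p - \<mu> * w"

text \<open>Truncating at \<open>0\<close> makes the remainder globally Lipschitz; it is harmless because the
  solution constructed below stays positive.\<close>
definition trunc_remainder :: "real \<Rightarrow> real" where
  "trunc_remainder w = remainder (max w 0)"

definition Lq :: real where
  "Lq = \<bar>p\<bar> * (1 - p) * c powr (p - 2)"

definition L :: real where
  "L = \<bar>p\<bar> * c powr (p - 1)"

lemma c_pos: "c > 0"
  using a_pos a_less_1 by (simp add: c_def)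

lemma c_powr: "c powr (p - 1) = a * (1 - a)"
proof -
  have "c powr (p - 1) = (a * (1 - a)) powr (1 / (p - 1) * (p - 1))"
    unfolding c_def powr_powr ..
  then show ?thesis using p_less_1 a_pos a_less_1 by simp
qed

lemma \<mu>_pos: "\<mu> > 0"
  using a_pos a_less_1 p_less_1 by (simp add: \<mu>_def)

lemma Lq_nonneg: "Lq \<ge> 0"
  using p_less_1 by (simp add: Lq_def)

lemma L_nonneg: "L \<ge> 0"
  by (simp add: L_def)

lemma remainder_0: "remainder 0 = 0"
proof -
  have "c powr p = c powr (p - 1) * c" using c_pos by (simp add: powr_diff)
  then show ?thesis by (simp add: remainder_def c_powr)
qed

lemma remainder_lipschitz:
  assumes "0 \<le> y1" "y1 \<le> y2" "y2 \<le> m"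
  shows "\<bar>remainder y2 - remainder y1\<bar> \<le> min (Lq * m) L * (y2 - y1)"
proof (cases "y1 = y2")
  case False
  then have "y1 < y2" using assms by simp
  have "(remainder has_real_derivative p * (c powr (p - 1) - (c + y) powr (p - 1))) (at y)" if "y > - c" for y
    using that unfolding remainder_def \<mu>_def by (auto intro!: derivative_eq_intros simp: c_powr algebra_simps)
  then obtain z where z: "y1 < z" "z < y2"
    and mvt: "remainder y2 - remainder y1 = (y2 - y1) * (p * (c powr (p - 1) - (c + z) powr (p - 1)))"
    using MVT2[OF \<open>y1 < y2\<close>, of remainder] c_pos assms by force
  define d where "d = c powr (p - 1) - (c + z) powr (p - 1)"
  have "d \<ge> 0"
    using powr_mono2'[of "p - 1" c "c + z"] c_pos z assms p_less_1 by (simp add: d_def)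
  have "d \<le> (1 - p) * c powr (p - 2) * z"
    using powr_diff_le_tangent[OF c_pos, of z "p - 1"] z assms p_less_1 by (simp add: d_def)
  also have "\<dots> \<le> (1 - p) * c powr (p - 2) * m"
    using z assms p_less_1 by (intro mult_left_mono) auto
  finally have "\<bar>p * d\<bar> \<le> Lq * m"
    using \<open>d \<ge> 0\<close> by (simp add: Lq_def abs_mult mult_left_mono mult.assoc)
  moreover have "\<bar>p * d\<bar> \<le> L"
    using \<open>d \<ge> 0\<close> c_pos by (simp add: L_def d_def abs_mult mult_left_mono)
  ultimately have "\<bar>p * d\<bar> \<le> min (Lq * m) L" by simp
  then have "(y2 - y1) * \<bar>p * d\<bar> \<le> (y2 - y1) * min (Lq * m) L"
    using \<open>y1 < y2\<close> by (intro mult_left_mono) auto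
  then show ?thesis using mvt \<open>y1 < y2\<close> by (simp add: d_def abs_mult mult.commute)
qed simp

lemma trunc_remainder_lipschitz:
  assumes "\<bar>w1\<bar> \<le> m" "\<bar>w2\<bar> \<le> m"
  shows "\<bar>trunc_remainder w1 - trunc_remainder w2\<bar> \<le> min (Lq * m) L * \<bar>w1 - w2\<bar>"
proof -
  have ordered: "\<bar>trunc_remainder u1 - trunc_remainder u2\<bar> \<le> min (Lq * m) L * \<bar>u1 - u2\<bar>"
    if "\<bar>u1\<bar> \<le> m" "\<bar>u2\<bar> \<le> m" "u1 \<le> u2" for u1 u2
  proof -
    have "\<bar>remainder (max u2 0) - remainder (max u1 0)\<bar> \<le> min (Lq * m) L * (max u2 0 - max u1 0)"
      by (rule remainder_lipschitz) (use that in auto)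
    also have "\<dots> \<le> min (Lq * m) L * \<bar>u1 - u2\<bar>"
      using that Lq_nonneg L_nonneg by (intro mult_left_mono) auto
    finally show ?thesis by (simp add: trunc_remainder_def abs_minus_commute)
  qed
  show ?thesis
    using ordered[OF assms] ordered[OF assms(2,1)] by (cases "w1 \<le> w2") (auto simp: abs_minus_commute)
qed

lemma abs_trunc_remainder_le: "\<bar>trunc_remainder w\<bar> \<le> min (Lq * \<bar>w\<bar>) L * \<bar>w\<bar>"
  using trunc_remainder_lipschitz[of w "\<bar>w\<bar>" 0] remainder_0 by (simp add: trunc_remainder_def)

lemma continuous_on_trunc_remainder: "continuous_on UNIV trunc_remainder"
proof -
  have "\<bar>trunc_remainder x - trunc_remainder y\<bar> \<le> L * \<bar>x - y\<bar>" for x y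
    using trunc_remainder_lipschitz[of x "max \<bar>x\<bar> \<bar>y\<bar>" y] L_nonneg
    by (smt (verit, best) mult_right_mono abs_ge_zero min.cobounded2)
  then have "L-lipschitz_on UNIV trunc_remainder"
    by (intro lipschitz_onI L_nonneg) (simp add: dist_real_def)
  then show ?thesis by (rule lipschitz_on_continuous_on)
qed

text \<open>The left-hand side is \<open>a(1 - a) V - V\<^sup>p\<close> at \<open>V = c + w > c\<close>.\<close>
lemma linear_plus_trunc_remainder_pos:
  assumes "w > 0"
  shows "\<mu> * w + trunc_remainder w > 0"
proof -
  have "(c + w) powr (p - 1) < c powr (p - 1)"
    using powr_less_mono2_neg[of "p - 1" c "c + w"] p_less_1 c_pos assms by simp
  then have "(c + w) powr (p - 1) * (c + w) < a * (1 - a) * (c + w)"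
    using c_pos assms c_powr by (intro mult_strict_right_mono) auto
  moreover have "(c + w) powr p = (c + w) powr (p - 1) * (c + w)"
    using c_pos assms by (simp add: powr_diff)
  ultimately show ?thesis using assms by (simp add: trunc_remainder_def remainder_def)
qed

section \<open>Construction of the profile by contraction\<close>

definition l1 :: real where
  "l1 = (1 - 2 * a + sqrt ((1 - 2 * a)\<^sup>2 + 4 * \<mu>)) / 2"

definition l2 :: real where
  "l2 = (1 - 2 * a - sqrt ((1 - 2 * a)\<^sup>2 + 4 * \<mu>)) / 2"

text \<open>\<open>K\<close> is chosen so large that the Lipschitz constant \<open>L\<close> is harmless where \<open>t \<rightarrow> -\<infinity>\<close>.\<close>
definition K :: real where
  "K = 2 * l1 + 12 * L / (l1 - l2) + 1"

lemma sqrt_discriminant_gt: "sqrt ((1 - 2 * a)\<^sup>2 + 4 * \<mu>) > \<bar>1 - 2 * a\<bar>"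
  using real_sqrt_less_mono[of "(1 - 2 * a)\<^sup>2" "(1 - 2 * a)\<^sup>2 + 4 * \<mu>"] \<mu>_pos by simp

lemma l1_l2_signs: "l2 < 0" "0 < l1"
proof -
  have "1 - 2 * a < sqrt ((1 - 2 * a)\<^sup>2 + 4 * \<mu>)" "- (1 - 2 * a) < sqrt ((1 - 2 * a)\<^sup>2 + 4 * \<mu>)"
    using sqrt_discriminant_gt by linarith+
  then show "l2 < 0" "0 < l1" unfolding l1_def l2_def by (simp_all add: field_simps)
qed

lemma l1_plus_l2: "l1 + l2 = 1 - 2 * a"
  by (simp add: l1_def l2_def field_simps)

lemma l1_times_l2: "l1 * l2 = - \<mu>"
proof -
  have "(sqrt ((1 - 2 * a)\<^sup>2 + 4 * \<mu>))\<^sup>2 = (1 - 2 * a)\<^sup>2 + 4 * \<mu>"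
    using \<mu>_pos by (simp add: add_nonneg_nonneg)
  then show ?thesis
    unfolding l1_def l2_def by (simp add: field_simps power2_eq_square)
qed

sublocale tail_green l1 l2 K
proof
  show "l2 < l1" "0 < l1" using l1_l2_signs by auto
  then show "2 * l1 \<le> K" using L_nonneg by (simp add: K_def)
qed

lemma L_small: "3 * L / (K - l1) \<le> (l1 - l2) / 4"
proof -
  have "12 * L / (l1 - l2) \<le> K - l1" unfolding K_def using l1_pos by simp
  then have "12 * L \<le> (K - l1) * (l1 - l2)" using l2_less_l1 by (simp add: field_simps)
  then show ?thesis using l1_less_K l2_less_l1 by (simp add: field_simps)
qed

text \<open>The decaying solution is sought as \<open>W = \<xi> e\<^bsup>-l\<^sub>1 t\<^esup> + weight \<cdot> z\<close>, which turns the integral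
  equation \<open>W = \<xi> e\<^bsup>-l\<^sub>1 t\<^esup> + tail_solution (trunc_remainder \<circ> W)\<close> into the fixed-point equation
  \<open>z = \<Phi> z\<close> on the ball of radius \<open>\<xi>\<close>; the amplitude \<open>\<xi>\<close> is small enough for the quadratic part
  of the remainder to be harmless.\<close>
definition \<xi> :: real where
  "\<xi> = l1 * (l1 - l2) / (36 * Lq + 1)"

definition trial :: "(real \<Rightarrow>\<^sub>C real) \<Rightarrow> real \<Rightarrow> real" where
  "trial z t = \<xi> * exp (- (l1 * t)) + weight t * z t"

definition Zball :: "(real \<Rightarrow>\<^sub>C real) set" where
  "Zball = cball 0 \<xi>"

definition \<theta> :: real where
  "\<theta> = (9 * Lq * \<xi> / l1 + 3 * L / (K - l1)) / (l1 - l2)"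

lemma \<xi>_pos: "\<xi> > 0"
  using l1_pos l2_less_l1 Lq_nonneg by (simp add: \<xi>_def)

lemma \<theta>_le_half: "\<theta> \<le> 1 / 2"
proof -
  have "36 * Lq * \<xi> = l1 * (l1 - l2) * (36 * Lq / (36 * Lq + 1))"
    using Lq_nonneg by (simp add: \<xi>_def field_simps)
  also have "\<dots> \<le> l1 * (l1 - l2)"
    using Lq_nonneg l1_pos l2_less_l1 by (intro mult_left_le) auto
  finally have "9 * Lq * \<xi> / l1 \<le> (l1 - l2) / 4" using l1_pos by (simp add: field_simps)
  then have "9 * Lq * \<xi> / l1 + 3 * L / (K - l1) \<le> (l1 - l2) / 2" using L_small by simp
  then show ?thesis using l2_less_l1 by (simp add: \<theta>_def divide_le_eq)
qed

lemma mem_Zball: "z \<in> Zball \<longleftrightarrow> (\<forall>t. \<bar>z t\<bar> \<le> \<xi>)"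
proof -
  have "norm z \<le> \<xi> \<longleftrightarrow> (\<forall>t. norm (z t) \<le> \<xi>)"
    using norm_bounded[of z] norm_bound[of z \<xi>] order_trans by blast
  then show ?thesis by (simp add: Zball_def)
qed

lemma abs_trial_le:
  assumes "z \<in> Zball"
  shows "\<bar>trial z s\<bar> \<le> \<xi> * (2 * exp (- (l1 * s)) + exp (- (K * s)))"
proof -
  have "\<bar>trial z s\<bar> \<le> \<xi> * exp (- (l1 * s)) + weight s * \<bar>z s\<bar>"
    using \<xi>_pos weight_pos[of s] by (simp add: trial_def abs_mult abs_triangle_ineq[THEN order_trans])
  also have "\<dots> \<le> \<xi> * exp (- (l1 * s)) + weight s * \<xi>"
    using assms weight_pos[of s] by (intro add_left_mono mult_left_mono) (auto simp: mem_Zball)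
  finally show ?thesis by (simp add: weight_def algebra_simps)
qed

lemma abs_trial_le_right:
  assumes "z \<in> Zball" "s \<ge> 0"
  shows "\<bar>trial z s\<bar> \<le> 3 * \<xi> * exp (- (l1 * s))"
proof -
  have "\<xi> * (2 * exp (- (l1 * s)) + exp (- (K * s))) \<le> \<xi> * (3 * exp (- (l1 * s)))"
    using exp_K_le_exp_l1[OF assms(2)] \<xi>_pos by (intro mult_left_mono) auto
  then show ?thesis using abs_trial_le[OF assms(1), of s] by simp
qed

lemma abs_trial_le_left:
  assumes "z \<in> Zball" "s \<le> 0"
  shows "\<bar>trial z s\<bar> \<le> 3 * \<xi> * exp (- (K * s))"
proof -
  have "\<xi> * (2 * exp (- (l1 * s)) + exp (- (K * s))) \<le> \<xi> * (3 * exp (- (K * s)))"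
    using exp_l1_le_exp_K[OF assms(2)] \<xi>_pos by (intro mult_left_mono) auto
  then show ?thesis using abs_trial_le[OF assms(1), of s] by simp
qed

lemma continuous_on_trunc_remainder_trial: "continuous_on UNIV (\<lambda>s. trunc_remainder (trial z s))"
  by (rule continuous_on_compose2[OF continuous_on_trunc_remainder])
    (auto simp: trial_def weight_def intro!: continuous_intros)

lemma exp_dominated_trunc_remainder_trial:
  assumes z: "z \<in> Zball"
  shows "exp_dominated (9 * Lq * \<xi>\<^sup>2) (3 * L * \<xi>) (\<lambda>s. trunc_remainder (trial z s))"
  unfolding exp_dominated_def
proof (intro conjI allI continuous_on_trunc_remainder_trial)
  fix s
  have bound: "0 \<le> 9 * Lq * \<xi>\<^sup>2 * exp (- (2 * l1 * s))" "0 \<le> 3 * L * \<xi> * exp (- (K * s))"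
    using Lq_nonneg L_nonneg \<xi>_pos by auto
  show "\<bar>trunc_remainder (trial z s)\<bar> \<le> 9 * Lq * \<xi>\<^sup>2 * exp (- (2 * l1 * s)) + 3 * L * \<xi> * exp (- (K * s))"
  proof (cases "s \<ge> 0")
    case True
    have "\<bar>trunc_remainder (trial z s)\<bar> \<le> Lq * \<bar>trial z s\<bar> * \<bar>trial z s\<bar>"
      using abs_trunc_remainder_le[of "trial z s"] by (smt (verit) abs_ge_zero min.cobounded1 mult_right_mono)
    also have "\<dots> \<le> Lq * (3 * \<xi> * exp (- (l1 * s))) * (3 * \<xi> * exp (- (l1 * s)))"
      using abs_trial_le_right[OF z True] Lq_nonneg by (intro mult_mono mult_left_mono) auto
    also have "\<dots> = 9 * Lq * \<xi>\<^sup>2 * exp (- (2 * l1 * s))"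
      by (simp add: power2_eq_square flip: exp_add)
    finally show ?thesis using bound by simp
  next
    case False
    have "\<bar>trunc_remainder (trial z s)\<bar> \<le> L * \<bar>trial z s\<bar>"
      using abs_trunc_remainder_le[of "trial z s"] by (smt (verit) abs_ge_zero min.cobounded2 mult_right_mono)
    also have "\<dots> \<le> L * (3 * \<xi> * exp (- (K * s)))"
      using abs_trial_le_left[OF z] False L_nonneg by (intro mult_left_mono) auto
    finally show ?thesis using bound by simp
  qed
qed

lemma abs_trial_diff_le: "\<bar>trial z1 s - trial z2 s\<bar> \<le> weight s * dist z1 z2"
proof -
  have "\<bar>trial z1 s - trial z2 s\<bar> = weight s * \<bar>z1 s - z2 s\<bar>"
    using weight_pos[of s] by (simp add: trial_def abs_mult flip: right_diff_distrib)
  also have "\<dots> \<le> weight s * dist z1 z2"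
    using dist_bounded[of z1 s z2] weight_pos[of s] by (simp add: dist_real_def)
  finally show ?thesis .
qed

lemma trunc_remainder_trial_diff_le_right:
  assumes z1: "z1 \<in> Zball" and z2: "z2 \<in> Zball" and "s \<ge> 0"
  shows "\<bar>trunc_remainder (trial z1 s) - trunc_remainder (trial z2 s)\<bar>
           \<le> 6 * Lq * \<xi> * dist z1 z2 * exp (- (2 * l1 * s))"
proof -
  have "weight s * dist z1 z2 \<le> 2 * exp (- (l1 * s)) * dist z1 z2"
    using exp_K_le_exp_l1[OF \<open>s \<ge> 0\<close>] by (intro mult_right_mono) (auto simp: weight_def)
  note trial_diff = order_trans[OF abs_trial_diff_le this]
  have "\<bar>trunc_remainder (trial z1 s) - trunc_remainder (trial z2 s)\<bar>
      \<le> min (Lq * (3 * \<xi> * exp (- (l1 * s)))) L * \<bar>trial z1 s - trial z2 s\<bar>"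
    using abs_trial_le_right[OF z1 \<open>s \<ge> 0\<close>] abs_trial_le_right[OF z2 \<open>s \<ge> 0\<close>]
    by (rule trunc_remainder_lipschitz)
  also have "\<dots> \<le> Lq * (3 * \<xi> * exp (- (l1 * s))) * (2 * exp (- (l1 * s)) * dist z1 z2)"
    using trial_diff Lq_nonneg \<xi>_pos by (intro mult_mono) auto
  also have "\<dots> = 6 * Lq * \<xi> * dist z1 z2 * exp (- (2 * l1 * s))"
    by (simp flip: exp_add)
  finally show ?thesis .
qed

lemma trunc_remainder_trial_diff_le_left:
  assumes "s \<le> 0"
  shows "\<bar>trunc_remainder (trial z1 s) - trunc_remainder (trial z2 s)\<bar>
           \<le> 2 * L * dist z1 z2 * exp (- (K * s))"
proof -
  have "weight s * dist z1 z2 \<le> 2 * exp (- (K * s)) * dist z1 z2"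
    using exp_l1_le_exp_K[OF \<open>s \<le> 0\<close>] by (intro mult_right_mono) (auto simp: weight_def)
  note trial_diff = order_trans[OF abs_trial_diff_le this]
  have "\<bar>trunc_remainder (trial z1 s) - trunc_remainder (trial z2 s)\<bar>
      \<le> min (Lq * max \<bar>trial z1 s\<bar> \<bar>trial z2 s\<bar>) L * \<bar>trial z1 s - trial z2 s\<bar>"
    by (rule trunc_remainder_lipschitz) auto
  also have "\<dots> \<le> L * (2 * exp (- (K * s)) * dist z1 z2)"
    using trial_diff L_nonneg by (intro mult_mono) auto
  finally show ?thesis by (simp add: mult_ac)
qed

lemma exp_dominated_trunc_remainder_trial_diff:
  assumes "z1 \<in> Zball" and "z2 \<in> Zball"
  shows "exp_dominated (6 * Lq * \<xi> * dist z1 z2) (2 * L * dist z1 z2)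
           (\<lambda>s. trunc_remainder (trial z1 s) - trunc_remainder (trial z2 s))"
  unfolding exp_dominated_def
proof (intro conjI allI continuous_on_diff continuous_on_trunc_remainder_trial)
  fix s
  have nonneg: "0 \<le> 6 * Lq * \<xi> * dist z1 z2 * exp (- (2 * l1 * s))" "0 \<le> 2 * L * dist z1 z2 * exp (- (K * s))"
    using Lq_nonneg L_nonneg \<xi>_pos by auto
  show "\<bar>trunc_remainder (trial z1 s) - trunc_remainder (trial z2 s)\<bar>
      \<le> 6 * Lq * \<xi> * dist z1 z2 * exp (- (2 * l1 * s)) + 2 * L * dist z1 z2 * exp (- (K * s))"
  proof (cases "s \<ge> 0")
    case True
    then show ?thesis using trunc_remainder_trial_diff_le_right[OF assms True] nonneg(2) by linarith
  next
    case False
    then show ?thesis using trunc_remainder_trial_diff_le_left[of s z1 z2] nonneg(1) by linarith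
  qed
qed

lemma abs_tail_solution_trial_le:
  assumes "z \<in> Zball"
  shows "\<bar>tail_solution (\<lambda>s. trunc_remainder (trial z s)) t\<bar> \<le> \<xi> / 2 * weight t"
proof -
  have "\<bar>tail_solution (\<lambda>s. trunc_remainder (trial z s)) t\<bar> \<le> \<xi> * \<theta> * weight t"
    using abs_tail_solution_le_weight[OF exp_dominated_trunc_remainder_trial[OF assms]] Lq_nonneg L_nonneg \<xi>_pos
    by (simp add: \<theta>_def field_simps power2_eq_square)
  also have "\<dots> \<le> \<xi> / 2 * weight t"
    using \<theta>_le_half \<xi>_pos weight_pos[of t] by (intro mult_right_mono) auto
  finally show ?thesis .
qed

definition \<Phi> :: "(real \<Rightarrow>\<^sub>C real) \<Rightarrow> (real \<Rightarrow>\<^sub>C real)" where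
  "\<Phi> z = Bcontfun (\<lambda>t. tail_solution (\<lambda>s. trunc_remainder (trial z s)) t / weight t)"

lemma \<Phi>_apply:
  assumes z: "z \<in> Zball"
  shows "\<Phi> z t = tail_solution (\<lambda>s. trunc_remainder (trial z s)) t / weight t"
proof -
  have "(\<lambda>t. tail_solution (\<lambda>s. trunc_remainder (trial z s)) t / weight t) \<in> bcontfun"
  proof (rule bcontfun_normI)
    show "continuous_on UNIV (\<lambda>t. tail_solution (\<lambda>s. trunc_remainder (trial z s)) t / weight t)"
      using has_real_derivative_tail_solution[OF exp_dominated_trunc_remainder_trial[OF z]]
        continuous_on_weight weight_pos
      by (intro continuous_intros) (auto intro: DERIV_isCont continuous_at_imp_continuous_on
          simp: less_imp_neq[OF weight_pos, symmetric])
    show "norm (tail_solution (\<lambda>s. trunc_remainder (trial z s)) t / weight t) \<le> \<xi> / 2" for t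
      using abs_tail_solution_trial_le[OF z, of t] weight_pos[of t] by (simp add: divide_le_eq)
  qed
  then show ?thesis by (simp add: \<Phi>_def Bcontfun_inverse)
qed

lemma \<Phi>_Zball:
  assumes z: "z \<in> Zball"
  shows "\<Phi> z \<in> Zball"
  unfolding mem_Zball
proof
  fix t
  have "\<bar>tail_solution (\<lambda>s. trunc_remainder (trial z s)) t\<bar> \<le> \<xi> * weight t"
    using abs_tail_solution_trial_le[OF z, of t] \<xi>_pos weight_pos[of t] by simp
  then show "\<bar>\<Phi> z t\<bar> \<le> \<xi>"
    using weight_pos[of t] by (simp add: \<Phi>_apply[OF z] abs_divide divide_le_eq)
qed

lemma \<Phi>_contraction:
  assumes z1: "z1 \<in> Zball" and z2: "z2 \<in> Zball"
  shows "dist (\<Phi> z1) (\<Phi> z2) \<le> 1 / 2 * dist z1 z2"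
proof (rule dist_bound)
  fix t
  define \<delta> where "\<delta> = dist z1 z2"
  have "\<bar>tail_solution (\<lambda>s. trunc_remainder (trial z1 s)) t - tail_solution (\<lambda>s. trunc_remainder (trial z2 s)) t\<bar>
      = \<bar>tail_solution (\<lambda>s. trunc_remainder (trial z1 s) - trunc_remainder (trial z2 s)) t\<bar>"
    using tail_solution_diff[OF exp_dominated_trunc_remainder_trial[OF z1]
        exp_dominated_trunc_remainder_trial[OF z2]] by simp
  also have "\<dots> \<le> (6 * Lq * \<xi> * \<delta> / l1 + 2 * L * \<delta> / (K - l1)) / (l1 - l2) * weight t"
    using abs_tail_solution_le_weight[OF exp_dominated_trunc_remainder_trial_diff[OF z1 z2]]
      Lq_nonneg L_nonneg \<xi>_pos by (simp add: \<delta>_def)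
  also have "\<dots> \<le> \<delta> * \<theta> * weight t"
  proof (rule mult_right_mono)
    have "6 * Lq * \<xi> * \<delta> / l1 + 2 * L * \<delta> / (K - l1) \<le> 9 * Lq * \<xi> * \<delta> / l1 + 3 * L * \<delta> / (K - l1)"
      using Lq_nonneg L_nonneg \<xi>_pos l1_pos l1_less_K
      by (intro add_mono divide_right_mono mult_right_mono) (auto simp: \<delta>_def)
    then have "(6 * Lq * \<xi> * \<delta> / l1 + 2 * L * \<delta> / (K - l1)) / (l1 - l2)
        \<le> (9 * Lq * \<xi> * \<delta> / l1 + 3 * L * \<delta> / (K - l1)) / (l1 - l2)"
      using l2_less_l1 by (intro divide_right_mono) auto
    also have "\<dots> = \<delta> * \<theta>"
      by (simp add: \<theta>_def field_simps)
    finally show "(6 * Lq * \<xi> * \<delta> / l1 + 2 * L * \<delta> / (K - l1)) / (l1 - l2) \<le> \<delta> * \<theta>" .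
  qed (use weight_pos[of t] in simp)
  also have "\<dots> \<le> \<delta> * (1 / 2) * weight t"
    using \<theta>_le_half weight_pos[of t] by (intro mult_right_mono mult_left_mono) (auto simp: \<delta>_def)
  finally show "dist (\<Phi> z1 t) (\<Phi> z2 t) \<le> 1 / 2 * dist z1 z2"
    using weight_pos[of t]
    by (simp add: \<Phi>_apply z1 z2 \<delta>_def dist_real_def divide_le_eq abs_divide flip: diff_divide_distrib)
qed

lemma \<Phi>_fixed_point: "\<exists>z\<in>Zball. \<Phi> z = z"
proof -
  have "complete Zball" by (simp add: Zball_def complete_eq_closed)
  moreover have "Zball \<noteq> {}" using \<xi>_pos by (auto simp: Zball_def)
  ultimately have "\<exists>!z\<in>Zball. \<Phi> z = z"
    using \<Phi>_Zball \<Phi>_contraction by (intro Banach_fix[of Zball "1 / 2"]) auto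
  then show ?thesis by blast
qed

definition W :: "real \<Rightarrow> real" where
  "W = trial (SOME z. z \<in> Zball \<and> \<Phi> z = z)"

definition W' :: "real \<Rightarrow> real" where
  "W' t = - l1 * \<xi> * exp (- (l1 * t)) + tail_solution' (\<lambda>s. trunc_remainder (W s)) t"

definition W'' :: "real \<Rightarrow> real" where
  "W'' t = l1\<^sup>2 * \<xi> * exp (- (l1 * t)) + tail_solution'' (\<lambda>s. trunc_remainder (W s)) t"

lemma W_fixed_point:
  shows W_integral_equation: "W t = \<xi> * exp (- (l1 * t)) + tail_solution (\<lambda>s. trunc_remainder (W s)) t"
    and exp_dominated_trunc_remainder_W: "exp_dominated (9 * Lq * \<xi>\<^sup>2) (3 * L * \<xi>) (\<lambda>s. trunc_remainder (W s))"
proof -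
  obtain z where z: "z \<in> Zball" "\<Phi> z = z" and W: "W = trial z"
    using someI_ex[OF \<Phi>_fixed_point[unfolded Bex_def]] by (auto simp: W_def)
  have "weight t * z t = tail_solution (\<lambda>s. trunc_remainder (W s)) t"
    using \<Phi>_apply[OF z(1), of t] z(2) weight_pos[of t] by (simp add: W field_simps)
  then show "W t = \<xi> * exp (- (l1 * t)) + tail_solution (\<lambda>s. trunc_remainder (W s)) t"
    by (simp add: W trial_def)
  show "exp_dominated (9 * Lq * \<xi>\<^sup>2) (3 * L * \<xi>) (\<lambda>s. trunc_remainder (W s))"
    unfolding W by (rule exp_dominated_trunc_remainder_trial[OF z(1)])
qed

lemma has_real_derivative_W: "(W has_real_derivative W' t) (at t)"
proof -
  have W: "W = (\<lambda>t. \<xi> * exp (- (l1 * t)) + tail_solution (\<lambda>s. trunc_remainder (W s)) t)"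
    using W_integral_equation by blast
  show ?thesis
    unfolding W'_def
    by (subst W) (auto intro!: derivative_eq_intros has_real_derivative_tail_solution[OF exp_dominated_trunc_remainder_W])
qed

lemma has_real_derivative_W': "(W' has_real_derivative W'' t) (at t)"
  unfolding W'_def[abs_def] W''_def
  by (auto intro!: derivative_eq_intros has_real_derivative_tail_solution'[OF exp_dominated_trunc_remainder_W]
      simp: power2_eq_square)

lemma W_ode: "W'' t + (l1 + l2) * W' t + l1 * l2 * W t = trunc_remainder (W t)"
proof -
  define f where "f = (\<lambda>s. trunc_remainder (W s))"
  have "W'' t + (l1 + l2) * W' t + l1 * l2 * W t
      = (l1\<^sup>2 + (l1 + l2) * (- l1) + l1 * l2) * \<xi> * exp (- (l1 * t))
        + (tail_solution'' f t + (l1 + l2) * tail_solution' f t + l1 * l2 * tail_solution f t)"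
    unfolding W''_def W'_def W_integral_equation[of t] f_def by (simp add: algebra_simps)
  also have "\<dots> = f t"
    using tail_solution_ode[OF exp_dominated_trunc_remainder_W] by (simp add: f_def power2_eq_square algebra_simps)
  finally show ?thesis by (simp add: f_def)
qed

lemma continuous_on_W: "continuous_on UNIV W"
  using has_real_derivative_W by (meson DERIV_isCont continuous_at_imp_continuous_on)

lemma W_near_leading_term:
  assumes "t \<ge> 0"
  shows "\<bar>W t - \<xi> * exp (- (l1 * t))\<bar> \<le> \<xi> / 2 * exp (- (l1 * t))"
proof -
  have "\<bar>W t - \<xi> * exp (- (l1 * t))\<bar> \<le> \<xi> * \<theta> * exp (- (l1 * t))"
    using abs_tail_solution_le_exp[OF exp_dominated_trunc_remainder_W _ _ assms] Lq_nonneg L_nonneg \<xi>_pos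
    by (simp add: W_integral_equation[of t] \<theta>_def field_simps power2_eq_square)
  also have "\<dots> \<le> \<xi> * (1 / 2) * exp (- (l1 * t))"
    using \<theta>_le_half \<xi>_pos by (intro mult_right_mono mult_left_mono) auto
  finally show ?thesis by simp
qed

lemma W_pos_right: "t \<ge> 0 \<Longrightarrow> W t > 0"
  using abs_le_D2[OF W_near_leading_term[of t]] mult_pos_pos[OF \<xi>_pos exp_gt_zero[of "- (l1 * t)"]]
  by linarith

lemma W_tendsto_0: "(W \<longlongrightarrow> 0) at_top"
proof (rule tendsto_sandwich[of "\<lambda>t. 0" _ _ "\<lambda>t. 3 / 2 * \<xi> * exp (- (l1 * t))"])
  show "\<forall>\<^sub>F t in at_top. 0 \<le> W t"
    using eventually_ge_at_top[of 0] by eventually_elim (simp add: W_pos_right less_imp_le)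
  show "\<forall>\<^sub>F t in at_top. W t \<le> 3 / 2 * \<xi> * exp (- (l1 * t))"
  proof (rule eventually_mono[OF eventually_ge_at_top[of 0]])
    fix t :: real assume "t \<ge> 0"
    from abs_le_D1[OF W_near_leading_term[OF this]] show "W t \<le> 3 / 2 * \<xi> * exp (- (l1 * t))" by simp
  qed
  show "((\<lambda>t. 3 / 2 * \<xi> * exp (- (l1 * t))) \<longlongrightarrow> 0) at_top"
    using l1_pos by real_asymp
qed simp

section \<open>Positivity and monotonicity of the profile\<close>

text \<open>The derivative of \<open>e\<^bsup>(l\<^sub>1 + l\<^sub>2) t\<^esup> W'\<close> is \<open>e\<^bsup>(l\<^sub>1 + l\<^sub>2) t\<^esup> (\<mu> W + trunc_remainder W)\<close>.\<close>
lemma scaled_W'_mono: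
  assumes "s \<le> r" and pos: "\<And>x. s \<le> x \<Longrightarrow> x \<le> r \<Longrightarrow> W x > 0"
  shows "exp ((l1 + l2) * s) * W' s \<le> exp ((l1 + l2) * r) * W' r"
proof (rule DERIV_nonneg_imp_nondecreasing[OF \<open>s \<le> r\<close>])
  fix x assume "s \<le> x" "x \<le> r"
  have "((\<lambda>t. exp ((l1 + l2) * t) * W' t) has_real_derivative
      exp ((l1 + l2) * x) * (W'' x + (l1 + l2) * W' x)) (at x)"
    by (auto intro!: derivative_eq_intros has_real_derivative_W' simp: algebra_simps)
  moreover have "W'' x + (l1 + l2) * W' x = \<mu> * W x + trunc_remainder (W x)"
    using W_ode[of x] l1_times_l2 by simp
  moreover have "\<mu> * W x + trunc_remainder (W x) > 0"
    using linear_plus_trunc_remainder_pos pos \<open>s \<le> x\<close> \<open>x \<le> r\<close> by blast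
  ultimately show "\<exists>y. ((\<lambda>t. exp ((l1 + l2) * t) * W' t) has_real_derivative y) (at x) \<and> 0 \<le> y"
    by (intro exI conjI) (auto simp: less_imp_le)
qed

text \<open>If \<open>W'\<close> were nonnegative somewhere in a region where \<open>W > 0\<close>, the monotone quantity above
  would keep \<open>W\<close> nondecreasing from there on, contradicting \<open>W \<rightarrow> 0\<close>.\<close>
lemma W'_neg_where_W_pos:
  assumes pos: "\<And>x. x > t0 \<Longrightarrow> W x > 0" and "s > t0"
  shows "W' s < 0"
proof (rule ccontr)
  assume "\<not> W' s < 0"
  then have "exp ((l1 + l2) * s) * W' s \<ge> 0" by simp
  then have "W' x \<ge> 0" if "s \<le> x" for x
  proof -
    have "0 \<le> exp ((l1 + l2) * x) * W' x"
      using scaled_W'_mono[OF that] pos \<open>s > t0\<close> \<open>exp ((l1 + l2) * s) * W' s \<ge> 0\<close> by force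
    then show ?thesis by (simp add: zero_le_mult_iff)
  qed
  then have "W s \<le> W x" if "s \<le> x" for x
    using has_real_derivative_W by (intro DERIV_nonneg_imp_nondecreasing[OF that]) auto
  then have "W s \<le> 0"
    by (intro tendsto_lowerbound[OF W_tendsto_0]) (auto intro: eventually_mono[OF eventually_ge_at_top[of s]])
  then show False using pos[OF \<open>s > t0\<close>] by simp
qed

text \<open>Otherwise, beyond the last point \<open>ts\<close> with \<open>W ts \<le> 0\<close> we would have \<open>W' < 0\<close>, so \<open>W\<close> could
  not become positive there.\<close>
lemma W_pos: "W t > 0"
proof (rule ccontr)
  assume "\<not> W t > 0"
  define S where "S = {s. W s \<le> 0}"
  have "t \<in> S" using \<open>\<not> W t > 0\<close> by (simp add: S_def)
  have "x \<le> 0" if "x \<in> S" for x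
    using that W_pos_right[of x] by (cases "0 \<le> x") (auto simp: S_def)
  then have "bdd_above S" by (rule bdd_aboveI)
  have "closed S"
    unfolding S_def by (intro closed_Collect_le continuous_on_W continuous_on_const)
  define ts where "ts = Sup S"
  have "W ts \<le> 0"
    using closed_contains_Sup[OF _ \<open>bdd_above S\<close> \<open>closed S\<close>] \<open>t \<in> S\<close> by (auto simp: ts_def S_def)
  have pos: "W x > 0" if "x > ts" for x
    using cSup_upper[OF _ \<open>bdd_above S\<close>, of x] that by (force simp: ts_def S_def)
  obtain \<eta> where "ts < \<eta>" "\<eta> < ts + 1" and "W (ts + 1) - W ts = (ts + 1 - ts) * W' \<eta>"
    using MVT2[of ts "ts + 1" W W'] has_real_derivative_W by auto
  moreover have "W' \<eta> < 0" using W'_neg_where_W_pos[OF pos \<open>ts < \<eta>\<close>] .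
  ultimately have "W (ts + 1) < W ts" by simp
  then show False using pos[of "ts + 1"] \<open>W ts \<le> 0\<close> by simp
qed

lemma W'_neg: "W' t < 0"
  using W'_neg_where_W_pos[of "t - 1" t] W_pos by simp

lemma W_strict_antimono: "s < t \<Longrightarrow> W t < W s"
  by (rule DERIV_neg_imp_decreasing) (use has_real_derivative_W W'_neg in blast)+

end

section \<open>The family of solutions\<close>

lemma solution_family_of_profile:
  fixes V V' V'' :: "real \<Rightarrow> real" and a p \<sigma> c :: real
  assumes V': "\<And>t. (V has_real_derivative V' t) (at t)"
    and V'': "\<And>t. (V' has_real_derivative V'' t) (at t)"
    and ode: "\<And>t. V'' t - (2 * a - 1) * V' t + a * (a - 1) * V t + V t powr p = 0"
    and V_gt: "\<And>t. c < V t" and decreasing: "\<And>s t. s < t \<Longrightarrow> V t < V s"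
    and limit: "(V \<longlongrightarrow> c) at_top" and "c > 0"
    and exponents: "\<sigma> + a * p = a - 2"
  shows "\<exists>U :: real \<Rightarrow> real \<Rightarrow> real.
           (\<forall>\<alpha>>0.
              C2_on {0<..} (U \<alpha>) \<and>
              (\<forall>x>0. U \<alpha> x > 0) \<and>
              (\<forall>x>0. deriv (deriv (U \<alpha>)) x + x powr \<sigma> * (U \<alpha> x) powr p = 0) \<and>
              ((\<lambda>x. U \<alpha> x / (c * x powr a)) \<longlongrightarrow> 1) (at_right 0)) \<and>
           (\<forall>\<alpha>1 \<alpha>2. \<alpha>1 > \<alpha>2 \<and> \<alpha>2 > 0 \<longrightarrow>
              (\<forall>x>0. U \<alpha>1 x > U \<alpha>2 x \<and> U \<alpha>2 x > c * x powr a))"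
proof -
  define U where "U = (\<lambda>\<alpha> x. x powr a * V (- ln (\<alpha> * x)))"
  have V_pos: "V t > 0" for t using V_gt[of t] \<open>c > 0\<close> by simp
  have "C2_on {0<..} (U \<alpha>) \<and> (\<forall>x>0. U \<alpha> x > 0) \<and>
      (\<forall>x>0. deriv (deriv (U \<alpha>)) x + x powr \<sigma> * (U \<alpha> x) powr p = 0) \<and>
      ((\<lambda>x. U \<alpha> x / (c * x powr a)) \<longlongrightarrow> 1) (at_right 0)" if "\<alpha> > 0" for \<alpha>
  proof (intro conjI)
    show "C2_on {0<..} (U \<alpha>)" "\<forall>x>0. deriv (deriv (U \<alpha>)) x + x powr \<sigma> * (U \<alpha> x) powr p = 0"
      using emden_fowler_substitution[OF V' V'' V_pos ode exponents \<open>\<alpha> > 0\<close>] by (simp_all add: U_def)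
    show "\<forall>x>0. U \<alpha> x > 0" using V_pos by (simp add: U_def)
    have "filterlim (\<lambda>x. - ln (\<alpha> * x)) at_top (at_right 0)" using \<open>\<alpha> > 0\<close> by real_asymp
    then have "((\<lambda>x. V (- ln (\<alpha> * x)) / c) \<longlongrightarrow> c / c) (at_right 0)"
      using \<open>c > 0\<close> by (intro tendsto_divide filterlim_compose[OF limit]) auto
    moreover have "\<forall>\<^sub>F x in at_right 0. V (- ln (\<alpha> * x)) / c = U \<alpha> x / (c * x powr a)"
      by (rule eventually_mono[OF eventually_at_right_less]) (simp add: U_def)
    ultimately show "((\<lambda>x. U \<alpha> x / (c * x powr a)) \<longlongrightarrow> 1) (at_right 0)"
      using \<open>c > 0\<close> by (simp add: tendsto_cong)
  qed
  moreover have "U \<alpha>1 x > U \<alpha>2 x \<and> U \<alpha>2 x > c * x powr a" if "\<alpha>2 < \<alpha>1" "0 < \<alpha>2" "0 < x" for \<alpha>1 \<alpha>2 x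
  proof
    have "V (- ln (\<alpha>2 * x)) < V (- ln (\<alpha>1 * x))" using that by (intro decreasing) simp
    then show "U \<alpha>1 x > U \<alpha>2 x" using \<open>0 < x\<close> by (simp add: U_def)
    show "U \<alpha>2 x > c * x powr a" using V_gt \<open>0 < x\<close> by (simp add: U_def mult.commute)
  qed
  ultimately show ?thesis by blast
qed

lemma (in emden_fowler) solution_family:
  assumes "\<sigma> + a * p = a - 2"
  shows "\<exists>U :: real \<Rightarrow> real \<Rightarrow> real.
           (\<forall>\<alpha>>0.
              C2_on {0<..} (U \<alpha>) \<and>
              (\<forall>x>0. U \<alpha> x > 0) \<and>
              (\<forall>x>0. deriv (deriv (U \<alpha>)) x + x powr \<sigma> * (U \<alpha> x) powr p = 0) \<and>
              ((\<lambda>x. U \<alpha> x / (c * x powr a)) \<longlongrightarrow> 1) (at_right 0)) \<and>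
           (\<forall>\<alpha>1 \<alpha>2. \<alpha>1 > \<alpha>2 \<and> \<alpha>2 > 0 \<longrightarrow>
              (\<forall>x>0. U \<alpha>1 x > U \<alpha>2 x \<and> U \<alpha>2 x > c * x powr a))"
proof (rule solution_family_of_profile[where V = "\<lambda>t. c + W t" and V' = W' and V'' = W''])
  show "((\<lambda>t. c + W t) has_real_derivative W' t) (at t)" for t
    by (auto intro!: derivative_eq_intros has_real_derivative_W)
  show "(W' has_real_derivative W'' t) (at t)" for t
    by (rule has_real_derivative_W')
  show "W'' t - (2 * a - 1) * W' t + a * (a - 1) * (c + W t) + (c + W t) powr p = 0" for t
    using W_ode[of t] W_pos[of t] l1_plus_l2 l1_times_l2
    by (simp add: trunc_remainder_def remainder_def \<mu>_def algebra_simps)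
  show "c < c + W t" for t
    using W_pos by simp
  show "c + W t < c + W s" if "s < t" for s t
    using W_strict_antimono[OF that] by simp
  show "((\<lambda>t. c + W t) \<longlongrightarrow> c) at_top"
    using tendsto_add[OF tendsto_const W_tendsto_0, of c] by simp
qed (use c_pos assms in auto)

theorem theorem5p1:
  fixes \<sigma> p :: real
  assumes "\<sigma> > -2" and "p < -1 - \<sigma>"
  shows "\<exists>U :: real \<Rightarrow> real \<Rightarrow> real.
           (\<forall>\<alpha>>0.
              C2_on {0<..} (U \<alpha>) \<and>
              (\<forall>x>0. U \<alpha> x > 0) \<and>
              (\<forall>x>0. deriv (deriv (U \<alpha>)) x + x powr \<sigma> * (U \<alpha> x) powr p = 0) \<and>
              ((\<lambda>x. U \<alpha> x / u_sing \<sigma> p x) \<longlongrightarrow> 1) (at_right 0)) \<and>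
           (\<forall>\<alpha>1 \<alpha>2. \<alpha>1 > \<alpha>2 \<and> \<alpha>2 > 0 \<longrightarrow>
              (\<forall>x>0. U \<alpha>1 x > U \<alpha>2 x \<and> U \<alpha>2 x > u_sing \<sigma> p x))"
proof -
  define a where "a = expo_a \<sigma> p"
  have "p < 1" using assms by simp
  then have a: "a = (\<sigma> + 2) / (1 - p)" by (simp add: a_def expo_a_def)
  have "0 < a" "a < 1" using assms \<open>p < 1\<close> by (simp_all add: a divide_less_eq)
  have exponents: "\<sigma> + a * p = a - 2" using \<open>p < 1\<close> by (simp add: a field_simps)
  interpret emden_fowler a p by unfold_locales fact+
  have "u_sing \<sigma> p = (\<lambda>x. c * x powr a)"
    by (simp add: fun_eq_iff u_sing_def const_c_def c_def flip: a_def)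
  then show ?thesis using solution_family[OF exponents] by simp
qed

end
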